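(* There exist no positive integers $a,b$ with $1\le a\le b$ such that every nonnegative integer can be written as $ax^2+by^2+5(z^2+zw+w^2)$ with $x,y,z,w\in\mathbb{Z}$. *)

theory Defs
  imports Main
begin

end

theory Submission
  imports Defs
begin

text \<open>
  The values of the Eisenstein form \<open>z\<^sup>2 + z w + w\<^sup>2\<close> are nonnegative and
  never equal to 2, so the summand \<open>5(z\<^sup>2 + z w + w\<^sup>2)\<close> is 0, 5 or at least 15.
  Representing 1 therefore forces \<open>a = 1\<close>, and representing 2 forces \<open>b \<le> 2\<close>.
  Then 3 is not of the form \<open>x\<^sup>2 + y\<^sup>2 + 5(\<dots>)\<close> and 10 is not of the form
  \<open>x\<^sup>2 + 2y\<^sup>2 + 5(\<dots>)\<close>.
\<close>

definition eisenstein_form :: "int \<Rightarrow> int \<Rightarrow> int" where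
  "eisenstein_form z w = z\<^sup>2 + z * w + w\<^sup>2"

definition represented_by :: "int \<Rightarrow> int \<Rightarrow> int \<Rightarrow> bool" where
  "represented_by a b n \<longleftrightarrow>
     (\<exists>x y z w. n = a * x\<^sup>2 + b * y\<^sup>2 + 5 * eisenstein_form z w)"

lemma four_times_eisenstein_form:
  "4 * eisenstein_form z w = (2 * z + w)\<^sup>2 + 3 * w\<^sup>2"
  by (simp add: eisenstein_form_def power2_eq_square algebra_simps)

lemma eisenstein_form_nonneg: "eisenstein_form z w \<ge> 0"
  using four_times_eisenstein_form[of z w] by (smt (verit) zero_le_power2)

lemma int_square_lt_16_iff: "(x::int)\<^sup>2 < 16 \<longleftrightarrow> x \<in> {-3, -2, -1, 0, 1, 2, 3}"
proof -
  have "(x::int)\<^sup>2 < 16 \<longleftrightarrow> \<not> \<bar>4\<bar> \<le> \<bar>x\<bar>"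
    unfolding abs_le_square_iff by auto
  also have "\<dots> \<longleftrightarrow> x \<in> {-3, -2, -1, 0, 1, 2, 3}"
    by auto
  finally show ?thesis .
qed

lemma eisenstein_form_ne_2: "eisenstein_form z w \<noteq> 2"
proof
  assume "eisenstein_form z w = 2"
  then have "(2 * z + w)\<^sup>2 + 3 * w\<^sup>2 = 8"
    using four_times_eisenstein_form[of z w] by simp
  then have "w\<^sup>2 < 16" "(2 * z + w)\<^sup>2 < 16"
    by (smt (verit) zero_le_power2)+
  then have "w \<in> {-3, -2, -1, 0, 1, 2, 3}" "z \<in> {-3..3}"
    unfolding int_square_lt_16_iff by auto
  then have "z \<in> {-3, -2, -1, 0, 1, 2, 3}" by auto
  with \<open>eisenstein_form z w = 2\<close> \<open>w \<in> _\<close> show False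
    by (auto simp: eisenstein_form_def power2_eq_square)
qed

lemma eisenstein_form_eq_0_if_small:
  assumes "5 * eisenstein_form z w < 5"
  shows "eisenstein_form z w = 0"
  using assms eisenstein_form_nonneg[of z w] by simp

lemma le_mult_square:
  assumes "0 \<le> (a::int)" "x \<noteq> 0"
  shows "a \<le> a * x\<^sup>2"
proof -
  have "1 \<le> x\<^sup>2"
    using assms(2) by (simp add: int_one_le_iff_zero_less)
  then show ?thesis
    using mult_left_mono[OF _ assms(1)] by fastforce
qed

lemma represented_by_1_imp:
  assumes "1 \<le> a" "a \<le> b" "represented_by a b 1"
  shows "a = 1"
proof -
  obtain x y z w where n: "1 = a * x\<^sup>2 + b * y\<^sup>2 + 5 * eisenstein_form z w"
    using assms(3) unfolding represented_by_def by blast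
  have "a * x\<^sup>2 \<ge> 0" "b * y\<^sup>2 \<ge> 0"
    using assms(1,2) by simp_all
  with n have "eisenstein_form z w = 0"
    by (intro eisenstein_form_eq_0_if_small) linarith
  with n have "x \<noteq> 0 \<or> y \<noteq> 0" by auto
  then have "a \<le> a * x\<^sup>2 \<or> b \<le> b * y\<^sup>2"
    using assms(1,2) le_mult_square[of a x] le_mult_square[of b y] by auto
  with n \<open>eisenstein_form z w = 0\<close> \<open>a * x\<^sup>2 \<ge> 0\<close> \<open>b * y\<^sup>2 \<ge> 0\<close> assms(1,2)
  show "a = 1" by linarith
qed

lemma represented_by_2_imp:
  assumes "1 \<le> b" "represented_by 1 b 2"
  shows "b \<le> 2"
proof -
  obtain x y z w where n: "2 = x\<^sup>2 + b * y\<^sup>2 + 5 * eisenstein_form z w"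
    using assms(2) unfolding represented_by_def by auto
  have "b * y\<^sup>2 \<ge> 0"
    using assms(1) by simp
  with n have "eisenstein_form z w = 0"
    by (intro eisenstein_form_eq_0_if_small) (smt (verit) zero_le_power2)
  have "y \<noteq> 0"
  proof
    assume "y = 0"
    with n \<open>eisenstein_form z w = 0\<close> have "x\<^sup>2 = 2" by simp
    then have "x \<in> {-3, -2, -1, 0, 1, 2, 3}"
      unfolding int_square_lt_16_iff[symmetric] by simp
    with \<open>x\<^sup>2 = 2\<close> show False by auto
  qed
  with n \<open>eisenstein_form z w = 0\<close> le_mult_square[of b y] assms(1) show "b \<le> 2"
    by (smt (verit) zero_le_power2)
qed

lemma not_represented_by_1_1_3: "\<not> represented_by 1 1 3"
proof
  assume "represented_by 1 1 3"
  then obtain x y z w where n: "3 = x\<^sup>2 + y\<^sup>2 + 5 * eisenstein_form z w"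
    unfolding represented_by_def by auto
  then have "eisenstein_form z w = 0"
    by (intro eisenstein_form_eq_0_if_small) (smt (verit) zero_le_power2)
  with n have sum: "x\<^sup>2 + y\<^sup>2 = 3" by simp
  then have "x\<^sup>2 < 16" "y\<^sup>2 < 16"
    by (smt (verit) zero_le_power2)+
  then have "x \<in> {-3, -2, -1, 0, 1, 2, 3}" "y \<in> {-3, -2, -1, 0, 1, 2, 3}"
    unfolding int_square_lt_16_iff .
  with sum show False by (auto simp: power2_eq_square)
qed

lemma not_represented_by_1_2_10: "\<not> represented_by 1 2 10"
proof
  assume "represented_by 1 2 10"
  then obtain x y z w where n: "10 = x\<^sup>2 + 2 * y\<^sup>2 + 5 * eisenstein_form z w"
    unfolding represented_by_def by auto
  then have "eisenstein_form z w \<le> 2"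
    by (smt (verit) zero_le_power2)
  then have "eisenstein_form z w \<in> {0, 1}"
    using eisenstein_form_nonneg[of z w] eisenstein_form_ne_2[of z w] by auto
  with n have sum: "x\<^sup>2 + 2 * y\<^sup>2 \<in> {5, 10}" by auto
  then have "x\<^sup>2 + 2 * y\<^sup>2 \<le> 10" by auto
  then have "x\<^sup>2 < 16" "y\<^sup>2 < 16"
    by (smt (verit) zero_le_power2)+
  then have "x \<in> {-3, -2, -1, 0, 1, 2, 3}" "y \<in> {-3, -2, -1, 0, 1, 2, 3}"
    unfolding int_square_lt_16_iff .
  with sum show False by (auto simp: power2_eq_square)
qed

theorem theorem7p1:
  shows "\<not> (\<exists>a b :: int. 1 \<le> a \<and> a \<le> b \<and>
           (\<forall>n :: int. n \<ge> 0 \<longrightarrow>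
              (\<exists>x y z w :: int. n = a * x^2 + b * y^2 + 5 * (z^2 + z * w + w^2))))"
proof
  assume "\<exists>a b :: int. 1 \<le> a \<and> a \<le> b \<and>
           (\<forall>n :: int. n \<ge> 0 \<longrightarrow>
              (\<exists>x y z w :: int. n = a * x^2 + b * y^2 + 5 * (z^2 + z * w + w^2)))"
  then obtain a b :: int where ab: "1 \<le> a" "a \<le> b"
    and universal: "\<And>n. n \<ge> 0 \<Longrightarrow> represented_by a b n"
    unfolding represented_by_def eisenstein_form_def by blast
  have "a = 1"
    using represented_by_1_imp[OF ab universal] by simp
  moreover have "b \<le> 2"
    using represented_by_2_imp ab universal[of 2] \<open>a = 1\<close> by simp
  ultimately consider "a = 1" "b = 1" | "a = 1" "b = 2"
    using ab by linarith
  then show False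
    using universal[of 3] universal[of 10] not_represented_by_1_1_3 not_represented_by_1_2_10
    by cases simp_all
qed

end
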